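(* Let $D$ be an integral domain with fraction field $K$, and let $R(D)$ be the subring of $K$ generated by $\{1/d \mid d \in D\setminus\{0\}\}$. Then $D$ is Bonaccian if and only if $R(D)$ is a valuation ring (of $K$). Moreover, the following are equivalent: (i) $D$ is Egyptian; (ii) $R(D) = K$; (iii) $D \subseteq R(D)$.
   Context: An element $\alpha\in K$ is called $D$-Egyptian if it is a sum of reciprocals of distinct nonzero elements of $D$. $D$ is Bonaccian if for every nonzero $\alpha \in K$, either $\alpha$ or $\alpha^{-1}$ is $D$-Egyptian. $D$ is Egyptian if every nonzero element of $K$ is $D$-Egyptian. *)

theory Defs
  imports Main
begin

text \<open>We work inside a field K (a type of class field). An integral domain D is
represented as a subring D of K; K is the fraction field of D when every element
of K is a quotient of elements of D.\<close>

definition is_subring :: "'a::field set \<Rightarrow> bool" where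
  "is_subring S \<longleftrightarrow> 0 \<in> S \<and> 1 \<in> S \<and>
     (\<forall>x\<in>S. \<forall>y\<in>S. x + y \<in> S \<and> x - y \<in> S \<and> x * y \<in> S)"

definition is_fraction_field_of :: "'a::field set \<Rightarrow> bool" where
  "is_fraction_field_of D \<longleftrightarrow> (\<forall>x. \<exists>a\<in>D. \<exists>b\<in>D. b \<noteq> 0 \<and> x = a / b)"

definition subring_generated :: "'a::field set \<Rightarrow> 'a set" where
  "subring_generated G = \<Inter>{S. is_subring S \<and> G \<subseteq> S}"

definition R_of :: "'a::field set \<Rightarrow> 'a set" where
  "R_of D = subring_generated {inverse d | d. d \<in> D \<and> d \<noteq> 0}"

definition valuation_ring :: "'a::field set \<Rightarrow> bool" where
  "valuation_ring V \<longleftrightarrow> is_subring V \<and>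
     (\<forall>x. x \<noteq> 0 \<longrightarrow> x \<in> V \<or> inverse x \<in> V)"

definition D_egyptian :: "'a::field set \<Rightarrow> 'a \<Rightarrow> bool" where
  "D_egyptian D \<alpha> \<longleftrightarrow> (\<exists>S. finite S \<and> S \<noteq> {} \<and> S \<subseteq> D - {0} \<and>
     \<alpha> = (\<Sum>d\<in>S. inverse d))"

definition bonaccian :: "'a::field set \<Rightarrow> bool" where
  "bonaccian D \<longleftrightarrow> (\<forall>\<alpha>. \<alpha> \<noteq> 0 \<longrightarrow> D_egyptian D \<alpha> \<or> D_egyptian D (inverse \<alpha>))"

definition egyptian :: "'a::field set \<Rightarrow> bool" where
  "egyptian D \<longleftrightarrow> (\<forall>\<alpha>. \<alpha> \<noteq> 0 \<longrightarrow> D_egyptian D \<alpha>)"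

end

(* R(D) is exactly the set E = unit_fraction_sums D of sums of reciprocals of distinct
   nonzero elements of D (the empty sum being 0), because E is already a subring of K.
   Granting this, a nonzero alpha is D-Egyptian iff it lies in R(D), and all three
   statements follow at once.
   The heart of the matter is that E is closed under adding a/d for an integer a: write a
   as a sum of distinct unit fractions 1/k with k integral (by divergence of the harmonic
   series and the greedy algorithm in characteristic 0; in positive characteristic a nonzero
   integer is itself the reciprocal of an integer), divide by d, and whenever a denominator
   kd already occurs, merge 1/(kd) + a/d = (1 + ak)/(kd) and recurse on fewer terms.
   Closure under sums, negatives and products follows, since E is also stable under
   division by elements of D. *)

theory Submission
  imports Defs "HOL-Analysis.Harmonic_Numbers"
begin

lemma egyptian_fraction_greedy:
  assumes "0 < c" "a \<le> c" "a * m < c"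
  shows "\<exists>T. finite T \<and> T \<subseteq> {m<..} \<and> real a / real c = (\<Sum>n\<in>T. inverse (real n))"
  using assms
proof (induction a arbitrary: c m rule: less_induct)
  case (less a)
  consider "a = 0" | "a \<noteq> 0" "a dvd c" | "a \<noteq> 0" "\<not> a dvd c" by blast
  then show ?case
  proof cases
    case 1
    then show ?thesis by (intro exI[of _ "{}"]) simp
  next
    case 2
    then obtain k where c: "c = a * k" by blast
    with less.prems 2 have "m < k" by auto
    with c 2 show ?thesis by (intro exI[of _ "{k}"]) (auto simp: inverse_eq_divide)
  next
    case 3
    \<comment> \<open>subtract the largest unit fraction 1/n below a/c; the numerator drops to a - c mod a\<close>
    define n where "n = c div a + 1"
    define a' where "a' = a - c mod a"
    have r: "0 < c mod a" "c mod a < a" using 3 by (auto simp: dvd_eq_mod_eq_0)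
    have an: "a * n = c + (a - c mod a)"
    proof -
      have "a * n = a * (c div a) + a" unfolding n_def by simp
      moreover have "c = a * (c div a) + c mod a" by simp
      ultimately show ?thesis using r by linarith
    qed
    have "a * m < a * n" using less.prems(3) an r by linarith
    then have "m < n" by simp
    have "a' < a" "a' < c" using r less.prems(2) unfolding a'_def by auto
    have "0 < n" unfolding n_def by simp
    then have "0 < c * n" "a' \<le> c * n" "a' * n < c * n"
      using less.prems(1) \<open>a' < c\<close> by (auto intro: order.trans[of _ c])
    then obtain T where T: "finite T" "T \<subseteq> {n<..}"
        "real a' / real (c * n) = (\<Sum>k\<in>T. inverse (real k))"
      using less.IH[OF \<open>a' < a\<close>] by blast
    have "real a * real n = real c + real a'" using an unfolding a'_def by (metis of_nat_add of_nat_mult)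
    then have "real a / real c = inverse (real n) + real a' / real (c * n)"
      using less.prems(1) \<open>0 < n\<close> by (simp add: field_simps)
    moreover have "n \<notin> T" using T by auto
    ultimately show ?thesis
      using T \<open>m < n\<close> by (intro exI[of _ "insert n T"]) auto
  qed
qed

lemma nat_eq_sum_unit_fractions:
  "\<exists>T. finite T \<and> 0 \<notin> T \<and> real b = (\<Sum>n\<in>T. inverse (real n))"
proof (cases "b = 0")
  case True
  then show ?thesis by (intro exI[of _ "{}"]) simp
next
  case False
  \<comment> \<open>since the harmonic series diverges, b lies between two consecutive partial sums;
    the remaining gap is then filled greedily\<close>
  have "\<forall>\<^sub>F n in sequentially. real b \<le> harm n"
    using harm_at_top by (simp add: filterlim_at_top)
  then obtain N where "real b \<le> harm N" by (auto simp: eventually_sequentially)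
  moreover have "\<not> real b \<le> harm 0" using False by (simp add: harm_def)
  ultimately obtain M where "\<forall>i\<le>M. \<not> real b \<le> harm i" "real b \<le> harm (Suc M)"
    using ex_least_nat_less[of "\<lambda>n. real b \<le> harm n" N] by blast
  then have M: "harm M < real b" "real b \<le> harm (Suc M)" by auto
  define \<rho> where "\<rho> = real b - harm M"
  have "\<rho> \<in> \<rat>" unfolding \<rho>_def harm_def by (intro Rats_diff Rats_sum Rats_inverse) auto
  then obtain a c where c: "c \<noteq> 0" and "\<bar>\<rho>\<bar> = real a / real c"
    by (rule Rats_abs_nat_div_natE)
  then have \<rho>: "\<rho> = real a / real c" "0 < \<rho>" using M(1) by (auto simp: \<rho>_def)
  have "\<rho> * real (Suc M) \<le> 1"
    using M(2) by (simp add: \<rho>_def harm_Suc field_simps del: of_nat_Suc)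
  then have "real (a * Suc M) \<le> real c" using \<rho> c by (simp add: field_simps)
  then have "a + a * M \<le> c" by (simp only: of_nat_le_iff mult_Suc_right)
  moreover have "0 < a" using \<rho> by (auto intro: gr0I)
  ultimately have "a \<le> c" "a * M < c" by linarith+
  then obtain U where U: "finite U" "U \<subseteq> {M<..}" "\<rho> = (\<Sum>n\<in>U. inverse (real n))"
    using egyptian_fraction_greedy[of c a M] c \<rho>(1) by auto
  have "{1..M} \<inter> U = {}" using U(2) by auto
  then have "(\<Sum>n\<in>{1..M} \<union> U. inverse (real n)) = harm M + \<rho>"
    using U by (simp add: sum.union_disjoint harm_def)
  then show ?thesis using U(1,2) by (intro exI[of _ "{1..M} \<union> U"]) (auto simp: \<rho>_def)
qed

definition unit_fraction_sums :: "'a::field set \<Rightarrow> 'a set" where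
  "unit_fraction_sums A = {\<Sum>x\<in>S. inverse x | S. finite S \<and> S \<subseteq> A - {0}}"

lemma unit_fraction_sumsI:
  "finite S \<Longrightarrow> S \<subseteq> A - {0} \<Longrightarrow> y = (\<Sum>x\<in>S. inverse x) \<Longrightarrow> y \<in> unit_fraction_sums A"
  unfolding unit_fraction_sums_def by blast

lemma unit_fraction_sumsE:
  assumes "y \<in> unit_fraction_sums A"
  obtains S where "finite S" "S \<subseteq> A - {0}" "y = (\<Sum>x\<in>S. inverse x)"
  using assms unfolding unit_fraction_sums_def by blast

lemma zero_in_unit_fraction_sums: "0 \<in> unit_fraction_sums A"
  by (rule unit_fraction_sumsI[of "{}"]) auto

lemma inverse_in_unit_fraction_sums: "a \<in> A \<Longrightarrow> inverse a \<in> unit_fraction_sums A"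
  by (cases "a = 0") (auto intro: unit_fraction_sumsI[of "{a}"] simp: zero_in_unit_fraction_sums)

lemma unit_fraction_sums_mono: "A \<subseteq> B \<Longrightarrow> unit_fraction_sums A \<subseteq> unit_fraction_sums B"
  unfolding unit_fraction_sums_def by blast

lemma divide_in_unit_fraction_sums:
  assumes "y \<in> unit_fraction_sums A"
  shows "y / d \<in> unit_fraction_sums ((\<lambda>a. a * d) ` A)"
proof (cases "d = 0")
  case True
  then show ?thesis by (simp add: zero_in_unit_fraction_sums)
next
  case False
  obtain S where S: "finite S" "S \<subseteq> A - {0}" "y = (\<Sum>x\<in>S. inverse x)"
    using assms by (rule unit_fraction_sumsE)
  have "inj_on (\<lambda>a. a * d) S" using False by (auto simp: inj_on_def)
  then have "y / d = (\<Sum>x\<in>(\<lambda>a. a * d) ` S. inverse x)"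
    by (simp add: S(3) sum.reindex divide_inverse sum_distrib_right)
  then show ?thesis using S(1,2) False by (intro unit_fraction_sumsI) auto
qed

lemma sum_inverse_of_nat_mult_prod:
  fixes T :: "nat set"
  assumes "finite T" "\<And>t. t \<in> T \<Longrightarrow> (of_nat t :: 'a::field) \<noteq> 0"
  shows "(\<Sum>t\<in>T. inverse (of_nat t :: 'a)) * (\<Prod>t\<in>T. of_nat t) = of_nat (\<Sum>t\<in>T. \<Prod>(T - {t}))"
proof -
  have "inverse (of_nat t :: 'a) * (\<Prod>s\<in>T. of_nat s) = (\<Prod>s\<in>T - {t}. of_nat s)" if "t \<in> T" for t
    using prod.remove[OF assms(1) that, of of_nat] assms(2)[OF that] by (simp add: field_simps)
  then show ?thesis by (simp add: sum_distrib_right of_nat_sum of_nat_prod)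
qed

lemma inj_of_nat_if_of_nat_nonzero:
  assumes "\<And>n. n > 0 \<Longrightarrow> of_nat n \<noteq> (0::'a::ring_1)"
  shows "inj (of_nat :: nat \<Rightarrow> 'a)"
proof -
  have "(of_nat m :: 'a) \<noteq> of_nat n" if "m < n" for m n
  proof -
    have "(of_nat n :: 'a) = of_nat m + of_nat (n - m)" using that by (simp flip: of_nat_add)
    then show ?thesis using assms[of "n - m"] that by auto
  qed
  then show ?thesis by (metis injI linorder_neq_iff)
qed

lemma of_nat_in_unit_fraction_sums_char_0:
  assumes char_0: "\<And>n. n > 0 \<Longrightarrow> of_nat n \<noteq> (0::'a::field)"
  shows "(of_nat b :: 'a) \<in> unit_fraction_sums (range of_nat)"
proof -
  obtain T where T: "finite T" "0 \<notin> T" "real b = (\<Sum>n\<in>T. inverse (real n))"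
    using nat_eq_sum_unit_fractions by blast
  have nonzero: "(of_nat t :: 'a) \<noteq> 0" if "t \<in> T" for t
    using T(2) that by (intro char_0) (auto intro: gr0I)
  \<comment> \<open>clearing denominators turns the real identity into one in \<nat>, which holds in every field\<close>
  have "(\<Sum>t\<in>T. inverse (real t)) * (\<Prod>t\<in>T. real t) = real (\<Sum>t\<in>T. \<Prod>(T - {t}))"
    using T(1) by (rule sum_inverse_of_nat_mult_prod) (use T(2) in \<open>auto intro: gr0I\<close>)
  then have "real (b * \<Prod>T) = real (\<Sum>t\<in>T. \<Prod>(T - {t}))" using T(3) by (simp add: of_nat_prod)
  then have nat_identity: "b * \<Prod>T = (\<Sum>t\<in>T. \<Prod>(T - {t}))" by (simp only: of_nat_eq_iff)
  have "of_nat b * (\<Prod>t\<in>T. of_nat t :: 'a) = of_nat (\<Sum>t\<in>T. \<Prod>(T - {t}))"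
    by (simp add: of_nat_prod flip: nat_identity)
  also have "\<dots> = (\<Sum>t\<in>T. inverse (of_nat t :: 'a)) * (\<Prod>t\<in>T. of_nat t)"
    using T(1) nonzero by (rule sum_inverse_of_nat_mult_prod[symmetric])
  finally have "of_nat b * (\<Prod>t\<in>T. of_nat t) = (\<Sum>t\<in>T. inverse (of_nat t :: 'a)) * (\<Prod>t\<in>T. of_nat t)" .
  moreover have "(\<Prod>t\<in>T. of_nat t :: 'a) \<noteq> 0" using T(1) nonzero by simp
  ultimately have b: "of_nat b = (\<Sum>t\<in>T. inverse (of_nat t :: 'a))" by simp
  have "inj (of_nat :: nat \<Rightarrow> 'a)" using char_0 by (rule inj_of_nat_if_of_nat_nonzero)
  then have "inj_on (of_nat :: nat \<Rightarrow> 'a) T" by (rule inj_on_subset) (rule subset_UNIV)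
  then have "of_nat b = (\<Sum>x\<in>of_nat ` T. inverse (x :: 'a))" by (simp add: b sum.reindex)
  then show ?thesis using T(1) nonzero by (intro unit_fraction_sumsI) auto
qed

lemma inverse_of_int_eq_of_int_positive_char:
  assumes "of_nat N = (0::'a::field)" "N > 0"
  obtains a' where "inverse (of_int a :: 'a) = of_int a'"
proof (cases "of_int a = (0::'a)")
  case True
  then show thesis using that[of 0] by simp
next
  case False
  \<comment> \<open>the prime ring is finite, so multiplication by the nonzero element of_int a permutes it\<close>
  let ?Z = "range (of_int :: int \<Rightarrow> 'a)"
  have mod_eq: "of_int k = (of_int (k mod int N) :: 'a)" for k
  proof -
    have "(of_int k :: 'a) = of_int (int N * (k div int N) + k mod int N)" by simp
    also have "\<dots> = of_nat N * of_int (k div int N) + of_int (k mod int N)"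
      by (simp only: of_int_add of_int_mult of_int_of_nat_eq)
    also have "\<dots> = of_int (k mod int N)" using assms(1) by simp
    finally show ?thesis .
  qed
  have "?Z \<subseteq> of_int ` {0..<int N}"
  proof
    fix x assume "x \<in> ?Z"
    then obtain k where "x = of_int k" by blast
    then have "x = of_int (k mod int N)" using mod_eq[of k] by simp
    moreover have "k mod int N \<in> {0..<int N}" using assms(2) by simp
    ultimately show "x \<in> of_int ` {0..<int N}" by blast
  qed
  then have "finite ?Z" by (rule finite_subset) simp
  moreover have "(\<lambda>x. of_int a * x) ` ?Z \<subseteq> ?Z"
  proof -
    have "of_int a * of_int k = (of_int (a * k) :: 'a)" for k by simp
    then show ?thesis by (blast intro: range_eqI)
  qed
  moreover have "inj_on (\<lambda>x. of_int a * x) ?Z" using False by (auto simp: inj_on_def)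
  ultimately have "(\<lambda>x. of_int a * x) ` ?Z = ?Z" by (rule endo_inj_surj)
  moreover have "1 \<in> ?Z" by (metis of_int_1 rangeI)
  ultimately have "1 \<in> (\<lambda>x. of_int a * x) ` ?Z" by (simp only:)
  then obtain a' where "of_int a * of_int a' = (1::'a)" by (metis imageE rangeE)
  then show thesis using that[of a'] by (simp add: inverse_unique)
qed

lemma of_int_in_unit_fraction_sums: "(of_int a :: 'a::field) \<in> unit_fraction_sums (range of_int)"
proof (cases "\<exists>N>0. of_nat N = (0::'a)")
  case True
  then obtain a' where "inverse (of_int a :: 'a) = of_int a'"
    using inverse_of_int_eq_of_int_positive_char by blast
  then have "(of_int a :: 'a) = inverse (of_int a')" by (metis inverse_inverse_eq)
  then show ?thesis by (simp add: inverse_in_unit_fraction_sums)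
next
  case False
  then have in_ufs: "(of_nat (nat \<bar>a\<bar>) :: 'a) / of_int (sgn a) \<in>
      unit_fraction_sums ((\<lambda>x. x * of_int (sgn a)) ` range of_nat)"
    by (intro divide_in_unit_fraction_sums of_nat_in_unit_fraction_sums_char_0) blast
  have range_sub: "(\<lambda>x. x * of_int (sgn a)) ` range of_nat \<subseteq> range (of_int :: int \<Rightarrow> 'a)"
  proof -
    have "of_nat n * of_int (sgn a) = (of_int (int n * sgn a) :: 'a)" for n by simp
    then show ?thesis by (blast intro: range_eqI)
  qed
  have "(of_nat (nat \<bar>a\<bar>) :: 'a) / of_int (sgn a) = of_int a"
    by (cases a rule: linorder_cases[of _ 0]) simp_all
  with in_ufs have "of_int a \<in> unit_fraction_sums ((\<lambda>x. x * of_int (sgn a)) ` range (of_nat :: nat \<Rightarrow> 'a))"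
    by (simp only:)
  then show ?thesis by (rule subsetD[OF unit_fraction_sums_mono[OF range_sub]])
qed

lemma sum_in_additively_closed:
  assumes "0 \<in> V" "\<And>x y. x \<in> V \<Longrightarrow> y \<in> V \<Longrightarrow> x + y \<in> V" "\<And>i. i \<in> I \<Longrightarrow> f i \<in> V"
  shows "sum f I \<in> V"
  using assms(3) by (induction I rule: infinite_finite_induct) (simp_all add: assms(1,2))

lemma of_int_in_subring:
  assumes "is_subring D"
  shows "of_int k \<in> D"
proof -
  have of_nat: "of_nat n \<in> D" for n
    by (induction n) (use assms in \<open>auto simp: is_subring_def\<close>)
  have "- of_nat (nat (- k)) \<in> D"
    using of_nat[of "nat (- k)"] assms unfolding is_subring_def by (metis diff_0)
  then show ?thesis using of_nat[of "nat k"] by (cases "k \<ge> 0") simp_all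
qed

lemma add_of_int_divide_in_unit_fraction_sums:
  assumes D: "is_subring D" and "y \<in> unit_fraction_sums D" "d \<in> D"
  shows "y + of_int a / d \<in> unit_fraction_sums D"
proof -
  obtain S where "finite S" "S \<subseteq> D - {0}" "y = (\<Sum>x\<in>S. inverse x)"
    using assms(2) by (rule unit_fraction_sumsE)
  then show ?thesis using \<open>d \<in> D\<close>
  proof (induction S arbitrary: y a d rule: finite_psubset_induct)
    case (psubset S)
    have "(\<lambda>x. x * d) ` range of_int \<subseteq> D"
      using D psubset.prems(3) of_int_in_subring[OF D] by (auto simp: is_subring_def)
    obtain T where T: "finite T" "T \<subseteq> (\<lambda>x. x * d) ` range of_int - {0}"
        "of_int a / d = (\<Sum>x\<in>T. inverse x)"
      using divide_in_unit_fraction_sums[OF of_int_in_unit_fraction_sums, of a d]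
      by (rule unit_fraction_sumsE)
    show ?case
    proof (cases "S \<inter> T = {}")
      case True
      then have "y + of_int a / d = (\<Sum>x\<in>S \<union> T. inverse x)"
        using psubset.hyps psubset.prems(2) T by (simp add: sum.union_disjoint)
      moreover have "S \<union> T \<subseteq> D - {0}"
        using psubset.prems(1) T(2) \<open>(\<lambda>x. x * d) ` range of_int \<subseteq> D\<close> by blast
      ultimately show ?thesis using psubset.hyps T(1) by (intro unit_fraction_sumsI) auto
    next
      case False
      \<comment> \<open>a denominator x = k d occurs twice: merge 1/x + a/d = (1 + a k)/x and recurse on S - {x}\<close>
      then obtain x k where x: "x \<in> S" "x = of_int k * d" "x \<noteq> 0" using T(2) by blast
      have "y + of_int a / d = (\<Sum>z\<in>S - {x}. inverse z) + (inverse x + of_int a / d)"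
        using psubset.prems(2) sum.remove[OF psubset.hyps x(1)] by (simp add: ac_simps)
      also have "inverse x + of_int a / d = of_int (1 + a * k) / x"
        using x(2,3) by (simp add: field_simps)
      finally have "y + of_int a / d = (\<Sum>z\<in>S - {x}. inverse z) + of_int (1 + a * k) / x" .
      moreover have "(\<Sum>z\<in>S - {x}. inverse z) + of_int (1 + a * k) / x \<in> unit_fraction_sums D"
        by (rule psubset.IH) (use x psubset.prems(1) in auto)
      ultimately show ?thesis by simp
    qed
  qed
qed

lemma add_in_unit_fraction_sums:
  assumes D: "is_subring D" and "y \<in> unit_fraction_sums D" "z \<in> unit_fraction_sums D"
  shows "y + z \<in> unit_fraction_sums D"
proof -
  obtain S where S: "finite S" "S \<subseteq> D - {0}" "z = (\<Sum>x\<in>S. inverse x)"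
    using assms(3) by (rule unit_fraction_sumsE)
  have "y + (\<Sum>x\<in>S'. inverse x) \<in> unit_fraction_sums D" if "S' \<subseteq> S" for S'
    using finite_subset[OF that S(1)] that
  proof (induction S' rule: finite_induct)
    case empty
    then show ?case using assms(2) by simp
  next
    case (insert x F)
    then have "y + (\<Sum>x\<in>F. inverse x) + of_int 1 / x \<in> unit_fraction_sums D"
      using S(2) by (intro add_of_int_divide_in_unit_fraction_sums[OF D]) auto
    then show ?case using insert.hyps by (simp add: ac_simps divide_inverse)
  qed
  then show ?thesis using S(3) by blast
qed

lemma mult_in_unit_fraction_sums:
  assumes D: "is_subring D" and y: "y \<in> unit_fraction_sums D" and "z \<in> unit_fraction_sums D"
  shows "y * z \<in> unit_fraction_sums D"
proof -
  obtain S where S: "finite S" "S \<subseteq> D - {0}" "z = (\<Sum>x\<in>S. inverse x)"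
    using assms(3) by (rule unit_fraction_sumsE)
  have "y / s \<in> unit_fraction_sums D" if "s \<in> S" for s
  proof -
    have "(\<lambda>a. a * s) ` D \<subseteq> D" using D S(2) that by (auto simp: is_subring_def)
    then show ?thesis using divide_in_unit_fraction_sums[OF y, of s] unit_fraction_sums_mono by blast
  qed
  then have "(\<Sum>s\<in>S. y / s) \<in> unit_fraction_sums D"
    by (intro sum_in_additively_closed zero_in_unit_fraction_sums add_in_unit_fraction_sums[OF D])
  then show ?thesis by (simp add: S(3) sum_distrib_left divide_inverse)
qed

lemma is_subring_unit_fraction_sums:
  assumes D: "is_subring D"
  shows "is_subring (unit_fraction_sums D)"
proof -
  have "(\<lambda>a. a * -1) ` D \<subseteq> D" using D by (auto simp: is_subring_def)
  then have "y / -1 \<in> unit_fraction_sums D" if "y \<in> unit_fraction_sums D" for y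
    using unit_fraction_sums_mono divide_in_unit_fraction_sums[OF that] by blast
  then have uminus: "- y \<in> unit_fraction_sums D" if "y \<in> unit_fraction_sums D" for y
    using that by simp
  have "1 \<in> unit_fraction_sums D"
    using inverse_in_unit_fraction_sums[of 1 D] D by (simp add: is_subring_def)
  then show ?thesis
    unfolding is_subring_def
    using zero_in_unit_fraction_sums uminus add_in_unit_fraction_sums[OF D] mult_in_unit_fraction_sums[OF D]
    by (metis diff_conv_add_uminus)
qed

lemma is_subring_subring_generated: "is_subring (subring_generated G)"
  unfolding subring_generated_def is_subring_def by auto

lemma subring_generated_least: "is_subring V \<Longrightarrow> G \<subseteq> V \<Longrightarrow> subring_generated G \<subseteq> V"
  unfolding subring_generated_def by auto

lemma is_subring_R_of: "is_subring (R_of D)"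
  unfolding R_of_def by (rule is_subring_subring_generated)

lemma inverse_in_R_of:
  assumes "d \<in> D"
  shows "inverse d \<in> R_of D"
proof (cases "d = 0")
  case True
  then show ?thesis using is_subring_R_of[of D] by (simp add: is_subring_def)
next
  case False
  then show ?thesis using assms unfolding R_of_def subring_generated_def by blast
qed

lemma R_of_eq_unit_fraction_sums:
  assumes "is_subring D"
  shows "R_of D = unit_fraction_sums D"
proof
  show "R_of D \<subseteq> unit_fraction_sums D"
    unfolding R_of_def using is_subring_unit_fraction_sums[OF assms]
    by (rule subring_generated_least) (auto intro: inverse_in_unit_fraction_sums)
  show "unit_fraction_sums D \<subseteq> R_of D"
  proof
    fix y assume "y \<in> unit_fraction_sums D"
    then obtain S where "S \<subseteq> D - {0}" "y = (\<Sum>x\<in>S. inverse x)" by (rule unit_fraction_sumsE)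
    then show "y \<in> R_of D"
      using is_subring_R_of[of D] by (auto intro!: sum_in_additively_closed inverse_in_R_of simp: is_subring_def)
  qed
qed

lemma D_egyptian_iff: "\<alpha> \<noteq> 0 \<Longrightarrow> D_egyptian D \<alpha> \<longleftrightarrow> \<alpha> \<in> unit_fraction_sums D"
  unfolding D_egyptian_def unit_fraction_sums_def by auto

lemma R_of_eq_UNIV_iff:
  assumes "is_fraction_field_of D"
  shows "R_of D = UNIV \<longleftrightarrow> D \<subseteq> R_of D"
proof
  assume "D \<subseteq> R_of D"
  have "x \<in> R_of D" for x
  proof -
    obtain a b where "a \<in> D" "b \<in> D" "x = a / b"
      using assms unfolding is_fraction_field_of_def by blast
    then show ?thesis using \<open>D \<subseteq> R_of D\<close> inverse_in_R_of[of b D] is_subring_R_of[of D]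
      by (auto simp: is_subring_def divide_inverse)
  qed
  then show "R_of D = UNIV" by blast
qed auto

theorem proposition2p4:
  fixes D :: "'a::field set"
  assumes "is_subring D"
    and "is_fraction_field_of D"
  shows "(bonaccian D \<longleftrightarrow> valuation_ring (R_of D))
    \<and> (egyptian D \<longleftrightarrow> R_of D = UNIV)
    \<and> (R_of D = UNIV \<longleftrightarrow> D \<subseteq> R_of D)"
proof -
  have egyptian_iff_in_R: "D_egyptian D \<alpha> \<longleftrightarrow> \<alpha> \<in> R_of D" if "\<alpha> \<noteq> 0" for \<alpha>
    using that by (simp add: D_egyptian_iff R_of_eq_unit_fraction_sums[OF assms(1)])
  have "0 \<in> R_of D" using is_subring_R_of[of D] by (simp add: is_subring_def)
  have "bonaccian D \<longleftrightarrow> valuation_ring (R_of D)"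
    unfolding bonaccian_def valuation_ring_def using is_subring_R_of[of D] egyptian_iff_in_R by simp
  moreover have "egyptian D \<longleftrightarrow> (\<forall>\<alpha>. \<alpha> \<in> R_of D)"
    unfolding egyptian_def using egyptian_iff_in_R \<open>0 \<in> R_of D\<close> by metis
  moreover have "R_of D = UNIV \<longleftrightarrow> D \<subseteq> R_of D"
    using assms(2) by (rule R_of_eq_UNIV_iff)
  ultimately show ?thesis by auto
qed

end
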